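(* Let $\{\mathcal{K}^s:s\geq0\}$ be a strongly continuous one-parameter semigroup of isometries on a complex Hilbert space $\mathcal{H}$, and let $\mathcal{H}_U=\bigcap_{s\geq0}\mathcal{K}^s\mathcal{H}$. Let $h\in\mathcal{H}_U$ and suppose there is a finite positive Borel measure $\mu$ on $\mathbb{R}$ with no atoms such that $\langle\mathcal{K}^sh,\mathcal{K}^th\rangle=\int_{\mathbb{R}}e^{i(s-t)x}\,d\mu(x)$ for all $s,t\geq0$ (i.e. $h$ has purely continuous spectral measure). Then $$\lim_{\tau\to\infty}\lambda_{h,\tau,1}=0.$$
   Context: A strongly continuous one-parameter semigroup of isometries means: each $\mathcal{K}^s$ is a linear isometry, $\mathcal{K}^0=I$, $\mathcal{K}^{s_1}\mathcal{K}^{s_2}=\mathcal{K}^{s_1+s_2}$, and $s\mapsto\mathcal{K}^sh$ is norm-continuous for each $h$. On $\mathcal{H}_U$ the operators $\mathcal{K}^s$ act unitarily. Inner products are linear in the first argument. For $h\in\mathcal{H}$ and $\tau>0$, $A_{h,\tau}$ is the operator on $L^2([0,\tau])$ defined by $(A_{h,\tau}g)(t)=\frac1\tau\int_0^\tau g(s)\langle\mathcal{K}^sh,\mathcal{K}^th\rangle\,ds$; it is a positive semidefinite self-adjoint compact operator, and $\lambda_{h,\tau,1}=\sup_{g\neq0}\langle A_{h,\tau}g,g\rangle/\|g\|^2$ is its largest eigenvalue. *)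

theory Defs
  imports "HOL-Analysis.Analysis"
begin

text \<open>A complex Hilbert space, rendered on a real Banach space type 'a
  (vector addition, real scaling and norm come from the type class) together with
  a complex scalar multiplication sm extending the real one and a complex inner
  product ip, linear in the first argument, conjugate symmetric, inducing the norm.\<close>
definition complex_hilbert :: "(complex \<Rightarrow> 'a::banach \<Rightarrow> 'a) \<Rightarrow> ('a \<Rightarrow> 'a \<Rightarrow> complex) \<Rightarrow> bool" where
  "complex_hilbert sm ip \<longleftrightarrow>
     (\<forall>r x. sm (complex_of_real r) x = scaleR r x) \<and>
     (\<forall>a b x. sm (a * b) x = sm a (sm b x)) \<and>
     (\<forall>a b x. sm (a + b) x = sm a x + sm b x) \<and>
     (\<forall>a x y. sm a (x + y) = sm a x + sm a y) \<and>
     (\<forall>x y z. ip (x + y) z = ip x z + ip y z) \<and>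
     (\<forall>a x y. ip (sm a x) y = a * ip x y) \<and>
     (\<forall>x y. ip y x = cnj (ip x y)) \<and>
     (\<forall>x. norm x = sqrt (Re (ip x x)))"

definition isometry_semigroup :: "(complex \<Rightarrow> 'a::banach \<Rightarrow> 'a) \<Rightarrow> (real \<Rightarrow> 'a \<Rightarrow> 'a) \<Rightarrow> bool" where
  "isometry_semigroup sm K \<longleftrightarrow>
     (\<forall>s\<ge>0. (\<forall>x y. K s (x + y) = K s x + K s y) \<and> (\<forall>a x. K s (sm a x) = sm a (K s x))
            \<and> (\<forall>x. norm (K s x) = norm x)) \<and>
     (\<forall>x. K 0 x = x) \<and>
     (\<forall>s1\<ge>0. \<forall>s2\<ge>0. \<forall>x. K (s1 + s2) x = K s1 (K s2 x)) \<and>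
     (\<forall>x. continuous_on {0..} (\<lambda>s. K s x))"

definition unitary_part :: "(real \<Rightarrow> 'a \<Rightarrow> 'a) \<Rightarrow> 'a set" where
  "unitary_part K = (\<Inter>s\<in>{0..}. range (K s))"

definition L2_on :: "real \<Rightarrow> (real \<Rightarrow> complex) \<Rightarrow> bool" where
  "L2_on \<tau> g \<longleftrightarrow> g \<in> borel_measurable lborel \<and>
      set_integrable lborel {0..\<tau>} (\<lambda>t. (cmod (g t))^2)"

definition L2_normsq :: "real \<Rightarrow> (real \<Rightarrow> complex) \<Rightarrow> real" where
  "L2_normsq \<tau> g = (LINT t:{0..\<tau>}|lborel. (cmod (g t))^2)"

definition A_op :: "(real \<Rightarrow> real \<Rightarrow> complex) \<Rightarrow> real \<Rightarrow> (real \<Rightarrow> complex) \<Rightarrow> real \<Rightarrow> complex" where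
  "A_op k \<tau> g t = (LINT s:{0..\<tau>}|lborel. g s * k s t) / complex_of_real \<tau>"

definition A_form :: "(real \<Rightarrow> real \<Rightarrow> complex) \<Rightarrow> real \<Rightarrow> (real \<Rightarrow> complex) \<Rightarrow> complex" where
  "A_form k \<tau> g = (LINT t:{0..\<tau>}|lborel. A_op k \<tau> g t * cnj (g t))"

text \<open>lambda_{h,tau,1}: supremum of the Rayleigh quotient (which is real, A being self-adjoint).\<close>
definition lambda1 :: "('a \<Rightarrow> 'a \<Rightarrow> complex) \<Rightarrow> (real \<Rightarrow> 'a \<Rightarrow> 'a) \<Rightarrow> 'a \<Rightarrow> real \<Rightarrow> real" where
  "lambda1 ip K h \<tau> =
     Sup {Re (A_form (\<lambda>s t. ip (K s h) (K t h)) \<tau> g) / L2_normsq \<tau> g | g. L2_on \<tau> g \<and> L2_normsq \<tau> g \<noteq> 0}"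

end

theory Submission
  imports Defs "HOL-Real_Asymp.Real_Asymp"
begin

text \<open>Write \<open>\<phi> v = \<integral> cis (v * x) d\<mu>\<close>, so that the kernel of the operator on \<open>[0, \<tau>]\<close> is
  \<open>\<phi> (s - t)\<close>. Two applications of Cauchy-Schwarz bound every Rayleigh quotient by the square root
  of \<open>sup\<^sub>t \<tau>\<^sup>-\<^sup>1 \<integral>\<^sub>0\<^sup>\<tau> |\<phi> (s - t)|\<^sup>2 ds\<close>. By Fubini \<open>|\<phi> v|\<^sup>2 = \<integral>\<integral> cos (v (x - y)) d\<mu> d\<mu>\<close>, and integrating
  the cosine over \<open>s\<close> first shows that this supremum is at most
  \<open>3 \<integral>\<integral> 1 / (1 + \<tau> |x - y|) d\<mu> d\<mu>\<close>. By dominated convergence the latter tends to the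
  \<open>\<mu> \<Otimes> \<mu>\<close>-measure of the diagonal, which vanishes because \<mu> has no atoms.\<close>

lemma borel_measurable_cis [measurable]: "cis \<in> borel_measurable borel"
  by (rule borel_measurable_continuous_onI) (simp add: continuous_on_cis)

lemma le_sqrt_mult_of_le_arith_geo_mean:
  fixes X P Q :: real
  assumes "0 \<le> P" "0 \<le> Q" and le: "\<And>a. a > 0 \<Longrightarrow> X \<le> (a * P + Q / a) / 2"
  shows "X \<le> sqrt (P * Q)"
proof (cases "P = 0 \<or> Q = 0")
  case False
  then have "P > 0" "Q > 0" using assms by auto
  define a where "a = sqrt (Q / P)"
  have "a > 0" "a * P = sqrt (P * Q)" "Q / a = sqrt (P * Q)"
    unfolding a_def using \<open>P > 0\<close> \<open>Q > 0\<close>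
    by (simp_all add: real_sqrt_divide real_sqrt_mult field_simps)
  then show ?thesis using le[of a] by simp
next
  case True
  show ?thesis
  proof (rule ccontr)
    assume "\<not> X \<le> sqrt (P * Q)"
    then have X: "X > 0" using True by auto
    have small: "c * X / (2 * (c + 1)) < X" if "0 \<le> c" for c
      using X that by (simp add: field_simps add_nonneg_pos)
    show False
    proof (cases "P = 0")
      case True
      have "X \<le> Q * X / (2 * (Q + 1))"
        using le[of "(Q + 1) / X"] X \<open>0 \<le> Q\<close> True by (simp add: field_simps)
      with small[OF \<open>0 \<le> Q\<close>] show False by simp
    next
      case False
      then have "Q = 0" using True by simp
      have "X \<le> P * X / (2 * (P + 1))"
        using le[of "X / (P + 1)"] X \<open>0 \<le> P\<close> \<open>Q = 0\<close> by (simp add: field_simps)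
      with small[OF \<open>0 \<le> P\<close>] show False by simp
    qed
  qed
qed

text \<open>Cauchy-Schwarz, with \<open>u\<close> not required to be measurable: it is applied to \<open>A g\<close>, whose
  measurability is never established.\<close>

lemma integral_le_sqrt_mult_integral_power2:
  fixes u f g :: "'b \<Rightarrow> real"
  assumes "\<And>x. u x \<le> f x * g x" "\<And>x. 0 \<le> f x" "\<And>x. 0 \<le> g x"
    and "integrable M (\<lambda>x. (f x)^2)" "integrable M (\<lambda>x. (g x)^2)"
  shows "integral\<^sup>L M u \<le> sqrt ((\<integral>x. (f x)^2 \<partial>M) * (\<integral>x. (g x)^2 \<partial>M))"
proof (rule le_sqrt_mult_of_le_arith_geo_mean)
  fix a :: real assume "a > 0"
  have "integral\<^sup>L M u \<le> (\<integral>x. (a * (f x)^2 + (g x)^2 / a) / 2 \<partial>M)"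
  proof (rule integral_mono')
    fix x
    have "0 \<le> (a * f x - g x)^2 / a" using \<open>a > 0\<close> by simp
    then have "f x * g x \<le> (a * (f x)^2 + (g x)^2 / a) / 2"
      using \<open>a > 0\<close> by (simp add: power2_eq_square field_simps)
    then show "u x \<le> (a * (f x)^2 + (g x)^2 / a) / 2" using assms(1) order_trans by blast
    show "0 \<le> (a * (f x)^2 + (g x)^2 / a) / 2" using \<open>a > 0\<close> by simp
  qed (use assms in simp)
  also have "\<dots> = (a * (\<integral>x. (f x)^2 \<partial>M) + (\<integral>x. (g x)^2 \<partial>M) / a) / 2"
    using assms by simp
  finally show "integral\<^sup>L M u \<le> \<dots>" .
qed (use integral_nonneg_AE in auto)

lemma norm_A_form_le:
  fixes k :: "real \<Rightarrow> real \<Rightarrow> complex" and g :: "real \<Rightarrow> complex"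
  assumes "\<tau> > 0" and g: "L2_on \<tau> g"
    and k_integrable: "\<And>t. t \<in> {0..\<tau>} \<Longrightarrow> set_integrable lborel {0..\<tau>} (\<lambda>s. (cmod (k s t))^2)"
    and k_bound: "\<And>t. t \<in> {0..\<tau>} \<Longrightarrow> (LINT s:{0..\<tau>}|lborel. (cmod (k s t))^2) \<le> B"
  shows "cmod (A_form k \<tau> g) \<le> sqrt (B / \<tau>) * L2_normsq \<tau> g"
proof -
  define I where "I = (\<lambda>s. indicator {0..\<tau>} s :: real)"
  have I_mult_power2: "(I s * y)^2 = I s * y^2" for s y
    unfolding I_def by (simp split: split_indicator)
  have I_power2: "(I s)^2 = I s" for s
    unfolding I_def by (simp split: split_indicator)
  have I_integrable: "integrable lborel (\<lambda>s. (c * I s)^2)" for c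
    unfolding power_mult_distrib I_power2
    by (auto simp: I_def emeasure_lborel_Icc_eq)
  define N where "N = L2_normsq \<tau> g"
  have N_eq: "N = (\<integral>s. (I s * cmod (g s))^2 \<partial>lborel)"
    unfolding N_def L2_normsq_def set_lebesgue_integral_def I_mult_power2 by (simp add: I_def)
  have g_integrable: "integrable lborel (\<lambda>s. (I s * cmod (g s))^2)"
    using g unfolding L2_on_def set_integrable_def I_mult_power2 by (simp add: I_def)
  have "0 \<le> (LINT s:{0..\<tau>}|lborel. (cmod (k s 0))^2)"
    unfolding set_lebesgue_integral_def by (simp add: integral_nonneg_AE)
  then have "0 \<le> B" using k_bound[of 0] \<open>\<tau> > 0\<close> by simp
  have "0 \<le> N" unfolding N_eq by simp
  define C where "C = sqrt (N * B) / \<tau>"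
  have A_op_bound: "cmod (A_op k \<tau> g t) \<le> C" if t: "t \<in> {0..\<tau>}" for t
  proof -
    have "cmod (LINT s:{0..\<tau>}|lborel. g s * k s t)
        \<le> (\<integral>s. norm (indicator {0..\<tau>} s *\<^sub>R (g s * k s t)) \<partial>lborel)"
      unfolding set_lebesgue_integral_def by (rule integral_norm_bound)
    also have "\<dots> \<le> sqrt (N * (\<integral>s. (I s * cmod (k s t))^2 \<partial>lborel))"
      unfolding N_eq
    proof (rule integral_le_sqrt_mult_integral_power2)
      show "integrable lborel (\<lambda>s. (I s * cmod (g s))^2)" by (fact g_integrable)
      show "integrable lborel (\<lambda>s. (I s * cmod (k s t))^2)"
        using k_integrable[OF t] unfolding set_integrable_def I_mult_power2 by (simp add: I_def)
    qed (auto simp: I_def norm_mult split: split_indicator)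
    also have "\<dots> \<le> sqrt (N * B)"
      using k_bound[OF t] \<open>0 \<le> N\<close>
      unfolding set_lebesgue_integral_def I_mult_power2 by (simp add: I_def mult_left_mono)
    finally show ?thesis unfolding A_op_def C_def using \<open>\<tau> > 0\<close>
      by (simp add: norm_divide divide_right_mono)
  qed
  have "cmod (A_form k \<tau> g)
      \<le> (\<integral>t. norm (indicator {0..\<tau>} t *\<^sub>R (A_op k \<tau> g t * cnj (g t))) \<partial>lborel)"
    unfolding A_form_def set_lebesgue_integral_def by (rule integral_norm_bound)
  also have "\<dots> \<le> sqrt ((\<integral>t. (C * I t)^2 \<partial>lborel) * N)"
    unfolding N_eq
  proof (rule integral_le_sqrt_mult_integral_power2)
    fix t
    show "norm (indicator {0..\<tau>} t *\<^sub>R (A_op k \<tau> g t * cnj (g t))) \<le> C * I t * (I t * cmod (g t))"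
      using A_op_bound[of t] unfolding I_def
      by (auto simp: norm_mult split: split_indicator intro: mult_right_mono)
    show "0 \<le> C * I t" unfolding C_def I_def using \<open>\<tau> > 0\<close> \<open>0 \<le> N\<close> \<open>0 \<le> B\<close> by simp
    show "integrable lborel (\<lambda>t. (I t * cmod (g t))^2)" by (fact g_integrable)
    show "integrable lborel (\<lambda>t. (C * I t)^2)" by (fact I_integrable)
  qed (simp add: I_def)
  also have "(\<integral>t. (C * I t)^2 \<partial>lborel) = C^2 * \<tau>"
    unfolding power_mult_distrib I_power2 using \<open>\<tau> > 0\<close> by (simp add: I_def)
  also have "sqrt (C^2 * \<tau> * N) = sqrt (B / \<tau>) * N"
    unfolding C_def using \<open>\<tau> > 0\<close> \<open>0 \<le> N\<close> \<open>0 \<le> B\<close>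
    by (simp add: real_sqrt_mult real_sqrt_divide field_simps)
  finally show ?thesis unfolding N_def .
qed

lemma abs_lambda1_le:
  assumes "\<tau> > 0"
    and "\<And>t. t \<in> {0..\<tau>} \<Longrightarrow> set_integrable lborel {0..\<tau>} (\<lambda>s. (cmod (ip (K s h) (K t h)))^2)"
    and "\<And>t. t \<in> {0..\<tau>} \<Longrightarrow> (LINT s:{0..\<tau>}|lborel. (cmod (ip (K s h) (K t h)))^2) \<le> B"
  shows "\<bar>lambda1 ip K h \<tau>\<bar> \<le> sqrt (B / \<tau>)"
  unfolding lambda1_def
proof (rule cSup_abs_le)
  have "L2_on \<tau> (\<lambda>_. 1)"
    unfolding L2_on_def set_integrable_def
    by (auto simp: emeasure_lborel_Icc_eq)
  moreover have "L2_normsq \<tau> (\<lambda>_. 1) \<noteq> 0"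
    unfolding L2_normsq_def set_lebesgue_integral_def using \<open>\<tau> > 0\<close> by simp
  ultimately show "{Re (A_form (\<lambda>s t. ip (K s h) (K t h)) \<tau> g) / L2_normsq \<tau> g |g.
      L2_on \<tau> g \<and> L2_normsq \<tau> g \<noteq> 0} \<noteq> {}" by blast
next
  fix q assume "q \<in> {Re (A_form (\<lambda>s t. ip (K s h) (K t h)) \<tau> g) / L2_normsq \<tau> g |g.
      L2_on \<tau> g \<and> L2_normsq \<tau> g \<noteq> 0}"
  then obtain g where g: "L2_on \<tau> g" "L2_normsq \<tau> g \<noteq> 0"
    and q: "q = Re (A_form (\<lambda>s t. ip (K s h) (K t h)) \<tau> g) / L2_normsq \<tau> g" by blast
  have "0 \<le> L2_normsq \<tau> g"
    unfolding L2_normsq_def set_lebesgue_integral_def by (simp add: integral_nonneg_AE)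
  then have "\<bar>q\<bar> \<le> cmod (A_form (\<lambda>s t. ip (K s h) (K t h)) \<tau> g) / L2_normsq \<tau> g"
    unfolding q by (simp add: divide_right_mono abs_Re_le_cmod)
  also have "\<dots> \<le> sqrt (B / \<tau>)"
    using norm_A_form_le[OF \<open>\<tau> > 0\<close> g(1)] assms(2,3) g(2) \<open>0 \<le> L2_normsq \<tau> g\<close>
    by (simp add: divide_le_eq)
  finally show "\<bar>q\<bar> \<le> sqrt (B / \<tau>)" .
qed

lemma (in pair_sigma_finite) integral_mult_integral_eq_integral_pair:
  fixes f g :: "_ \<Rightarrow> 'c::{banach, real_normed_field, second_countable_topology}"
  assumes "integrable (M1 \<Otimes>\<^sub>M M2) (\<lambda>p. f (fst p) * g (snd p))"
  shows "integral\<^sup>L M1 f * integral\<^sup>L M2 g = (\<integral>p. f (fst p) * g (snd p) \<partial>(M1 \<Otimes>\<^sub>M M2))"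
  using integral_fst'[OF assms] by simp

lemma cmod_integral_cis_power2:
  fixes \<mu> :: "real measure"
  assumes [measurable_cong]: "sets \<mu> = sets borel" and "finite_measure \<mu>"
  shows "(cmod (\<integral>x. cis (v * x) \<partial>\<mu>))^2 = (\<integral>p. cos (v * (fst p - snd p)) \<partial>(\<mu> \<Otimes>\<^sub>M \<mu>))"
proof -
  interpret finite_measure \<mu> by fact
  interpret P: pair_sigma_finite \<mu> \<mu> ..
  interpret PF: finite_measure "\<mu> \<Otimes>\<^sub>M \<mu>"
    by (rule finite_measure_pair_measure) unfold_locales
  have cis_diff: "cis (v * fst p) * cis (- (v * snd p)) = cis (v * (fst p - snd p))" for p
    by (simp add: cis_mult right_diff_distrib)
  have "(\<lambda>p. cis (v * (fst p - snd p))) \<in> borel_measurable (\<mu> \<Otimes>\<^sub>M \<mu>)"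
    by measurable
  then have integrable: "integrable (\<mu> \<Otimes>\<^sub>M \<mu>) (\<lambda>p. cis (v * (fst p - snd p)))"
    by (intro PF.integrable_const_bound[where B=1]) auto
  let ?\<phi> = "\<integral>x. cis (v * x) \<partial>\<mu>"
  have "complex_of_real ((cmod ?\<phi>)^2) = ?\<phi> * cnj ?\<phi>"
    by (rule complex_norm_square)
  also have "\<dots> = ?\<phi> * (\<integral>y. cis (- (v * y)) \<partial>\<mu>)"
    by (simp add: cis_cnj flip: Bochner_Integration.integral_cnj)
  also have "\<dots> = (\<integral>p. cis (v * (fst p - snd p)) \<partial>(\<mu> \<Otimes>\<^sub>M \<mu>))"
    using P.integral_mult_integral_eq_integral_pair[of "\<lambda>x. cis (v * x)" "\<lambda>y. cis (- (v * y))"]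
      integrable
    by (simp add: cis_diff)
  finally have "(cmod ?\<phi>)^2 = Re (\<integral>p. cis (v * (fst p - snd p)) \<partial>(\<mu> \<Otimes>\<^sub>M \<mu>))"
    by (metis Re_complex_of_real)
  also have "\<dots> = (\<integral>p. cos (v * (fst p - snd p)) \<partial>(\<mu> \<Otimes>\<^sub>M \<mu>))"
    using integral_Re[OF integrable] by simp
  finally show ?thesis .
qed

lemma borel_measurable_integral_cis:
  fixes \<mu> :: "real measure"
  assumes [measurable_cong]: "sets \<mu> = sets borel" and "finite_measure \<mu>"
  shows "(\<lambda>v. \<integral>x. cis (v * x) \<partial>\<mu>) \<in> borel_measurable borel"
proof -
  interpret finite_measure \<mu> by fact
  show ?thesis by measurable
qed

lemma set_integrable_cmod_integral_cis_power2:
  fixes \<mu> :: "real measure"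
  assumes [measurable_cong]: "sets \<mu> = sets borel" and "finite_measure \<mu>"
  shows "set_integrable lborel {a..b} (\<lambda>s. (cmod (\<integral>x. cis ((s - t) * x) \<partial>\<mu>))^2)"
  unfolding set_integrable_def
proof (rule integrableI_bounded_set_indicator)
  interpret finite_measure \<mu> by fact
  note borel_measurable_integral_cis[OF assms, measurable]
  show "(\<lambda>s. (cmod (\<integral>x. cis ((s - t) * x) \<partial>\<mu>))^2) \<in> borel_measurable lborel"
    by measurable
  have "cmod (\<integral>x. cis ((s - t) * x) \<partial>\<mu>) \<le> measure \<mu> (space \<mu>)" for s
    using integral_norm_bound[of \<mu> "\<lambda>x. cis ((s - t) * x)"] by simp
  then show "AE s in lborel. s \<in> {a..b} \<longrightarrow> norm ((cmod (\<integral>x. cis ((s - t) * x) \<partial>\<mu>))^2) \<le> (measure \<mu> (space \<mu>))^2"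
    by (intro AE_I2) (simp add: power_mono)
qed (simp_all add: emeasure_lborel_Icc_eq)

lemma abs_set_integral_cos_le:
  fixes \<tau> t z :: real
  assumes "\<tau> > 0"
  shows "\<bar>LINT s:{0..\<tau>}|lborel. cos ((s - t) * z)\<bar> \<le> 3 * \<tau> / (1 + \<tau> * \<bar>z\<bar>)"
proof -
  define X where "X = \<bar>LINT s:{0..\<tau>}|lborel. cos ((s - t) * z)\<bar>"
  have X_le_length: "X \<le> \<tau>"
  proof -
    have "X \<le> (\<integral>s. norm (indicator {0..\<tau>} s *\<^sub>R cos ((s - t) * z)) \<partial>lborel)"
      unfolding X_def set_lebesgue_integral_def real_norm_def[symmetric] by (rule integral_norm_bound)
    also have "\<dots> \<le> (\<integral>s. indicator {0..\<tau>} s \<partial>lborel)"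
      by (rule integral_mono')
        (auto split: split_indicator simp: emeasure_lborel_Icc_eq)
    finally show ?thesis using \<open>\<tau> > 0\<close> by simp
  qed
  have X_le_inverse: "\<bar>z\<bar> * X \<le> 2" if "z \<noteq> 0"
  proof -
    have "(LINT s:{0..\<tau>}|lborel. cos ((s - t) * z)) = sin ((\<tau> - t) * z) / z - sin ((0 - t) * z) / z"
      unfolding set_lebesgue_integral_def
    proof (rule integral_FTC_atLeastAtMost)
      fix x
      have "((\<lambda>s. sin ((s - t) * z) / z) has_real_derivative cos ((x - t) * z)) (at x within {0..\<tau>})"
        using \<open>z \<noteq> 0\<close> by (auto intro!: derivative_eq_intros)
      then show "((\<lambda>s. sin ((s - t) * z) / z) has_vector_derivative cos ((x - t) * z)) (at x within {0..\<tau>})"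
        by (simp add: has_real_derivative_iff_has_vector_derivative)
      show "continuous_on {0..\<tau>} (\<lambda>s. cos ((s - t) * z))"
        by (intro continuous_intros)
    qed (use \<open>\<tau> > 0\<close> in simp)
    then have "\<bar>z\<bar> * X = \<bar>sin ((\<tau> - t) * z) + sin (t * z)\<bar>"
      unfolding X_def using \<open>z \<noteq> 0\<close> by (simp add: add_divide_distrib[symmetric])
    also have "\<dots> \<le> 2" using abs_sin_le_one[of "(\<tau> - t) * z"] abs_sin_le_one[of "t * z"] by linarith
    finally show ?thesis .
  qed
  have "X * (1 + \<tau> * \<bar>z\<bar>) \<le> 3 * \<tau>"
  proof (cases "z = 0")
    case False
    have "X * (1 + \<tau> * \<bar>z\<bar>) = X + \<tau> * (\<bar>z\<bar> * X)" by (simp add: algebra_simps)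
    also have "\<dots> \<le> \<tau> + \<tau> * 2"
      using X_le_length X_le_inverse[OF False] \<open>\<tau> > 0\<close> by (intro add_mono mult_left_mono) auto
    finally show ?thesis by simp
  qed (use X_le_length \<open>\<tau> > 0\<close> in simp)
  then show ?thesis unfolding X_def[symmetric] using \<open>\<tau> > 0\<close>
    by (simp add: pos_le_divide_eq add_pos_nonneg)
qed

lemma set_integral_cmod_integral_cis_power2_le:
  fixes \<mu> :: "real measure"
  assumes [measurable_cong]: "sets \<mu> = sets borel" and "finite_measure \<mu>" and "\<tau> > 0"
  shows "(LINT s:{0..\<tau>}|lborel. (cmod (\<integral>x. cis ((s - t) * x) \<partial>\<mu>))^2)
    \<le> 3 * \<tau> * (\<integral>p. 1 / (1 + \<tau> * \<bar>fst p - snd p\<bar>) \<partial>(\<mu> \<Otimes>\<^sub>M \<mu>))"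
proof -
  define M where "M = \<mu> \<Otimes>\<^sub>M \<mu>"
  define N where "N = restrict_space lborel {0..\<tau>}"
  interpret M: finite_measure M
    unfolding M_def by (rule finite_measure_pair_measure) (use assms in auto)
  interpret N: finite_measure N
    unfolding N_def by (rule finite_measureI) (simp add: emeasure_restrict_space emeasure_lborel_Icc_eq)
  interpret NM: pair_sigma_finite N M ..
  interpret NM: finite_measure "N \<Otimes>\<^sub>M M" by (rule finite_measure_pair_measure) unfold_locales
  have [measurable_cong]: "sets M = sets (borel \<Otimes>\<^sub>M borel)"
    unfolding M_def using assms(1) assms(1) by (rule sets_pair_measure_cong)
  have [measurable]: "(\<lambda>x. x) \<in> borel_measurable N"
    unfolding N_def by (rule measurable_restrict_space1) simp
  have "(\<lambda>(s, p). cos ((s - t) * (fst p - snd p))) \<in> borel_measurable (N \<Otimes>\<^sub>M M)"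
    by measurable
  then have integrable: "integrable (N \<Otimes>\<^sub>M M) (\<lambda>(s, p). cos ((s - t) * (fst p - snd p)))"
    by (intro NM.integrable_const_bound[where B=1]) auto
  have set_integral_eq: "(LINT s:{0..\<tau>}|lborel. f s) = (\<integral>s. f s \<partial>N)" for f :: "real \<Rightarrow> real"
    unfolding N_def set_lebesgue_integral_def by (rule integral_restrict_space[symmetric]) simp
  have "(LINT s:{0..\<tau>}|lborel. (cmod (\<integral>x. cis ((s - t) * x) \<partial>\<mu>))^2)
      = (\<integral>s. (\<integral>p. cos ((s - t) * (fst p - snd p)) \<partial>M) \<partial>N)"
    unfolding set_integral_eq M_def by (simp add: cmod_integral_cis_power2[OF assms(1,2)])
  also have "\<dots> = (\<integral>p. (\<integral>s. cos ((s - t) * (fst p - snd p)) \<partial>N) \<partial>M)"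
    using NM.Fubini_integral[of "\<lambda>s p. cos ((s - t) * (fst p - snd p))"] integrable by simp
  also have "\<dots> \<le> (\<integral>p. \<bar>\<integral>s. cos ((s - t) * (fst p - snd p)) \<partial>N\<bar> \<partial>M)"
    using integral_abs_bound by (rule order_trans[OF abs_ge_self])
  also have "\<dots> \<le> (\<integral>p. 3 * \<tau> / (1 + \<tau> * \<bar>fst p - snd p\<bar>) \<partial>M)"
  proof (rule integral_mono')
    show "integrable M (\<lambda>p. 3 * \<tau> / (1 + \<tau> * \<bar>fst p - snd p\<bar>))"
    proof (rule M.integrable_const_bound[where B="3 * \<tau>"])
      show "AE p in M. norm (3 * \<tau> / (1 + \<tau> * \<bar>fst p - snd p\<bar>)) \<le> 3 * \<tau>"
        using \<open>\<tau> > 0\<close> by (auto simp: divide_le_eq)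
    qed measurable
  qed (use abs_set_integral_cos_le[OF \<open>\<tau> > 0\<close>] \<open>\<tau> > 0\<close> in \<open>simp_all flip: set_integral_eq\<close>)
  finally show ?thesis unfolding M_def by (simp add: divide_inverse flip: integral_mult_right_zero)
qed

lemma tendsto_integral_inverse_dist_diagonal:
  fixes \<mu> :: "real measure"
  assumes [measurable_cong]: "sets \<mu> = sets borel" and "finite_measure \<mu>"
    and no_atoms: "\<And>x. emeasure \<mu> {x} = 0"
  shows "((\<lambda>\<tau>. \<integral>p. 1 / (1 + \<tau> * \<bar>fst p - snd p\<bar>) \<partial>(\<mu> \<Otimes>\<^sub>M \<mu>)) \<longlongrightarrow> 0) at_top"
proof -
  define M where "M = \<mu> \<Otimes>\<^sub>M \<mu>"
  interpret finite_measure \<mu> by fact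
  interpret M: finite_measure M
    unfolding M_def by (rule finite_measure_pair_measure) unfold_locales
  have M_sets [measurable_cong]: "sets M = sets (borel \<Otimes>\<^sub>M borel)"
    unfolding M_def using assms(1) assms(1) by (rule sets_pair_measure_cong)
  define D where "D = {y. \<exists>x::real. y = (x, x)}"
  have D_sets [measurable]: "D \<in> sets M"
    unfolding M_sets borel_prod D_def by (rule borel_closed[OF closed_diagonal])
  have "emeasure M D = (\<integral>\<^sup>+x. emeasure \<mu> (Pair x -` D) \<partial>\<mu>)"
    unfolding M_def by (rule emeasure_pair_measure_alt) (use D_sets M_def in simp)
  also have "\<dots> = (\<integral>\<^sup>+x. emeasure \<mu> {x} \<partial>\<mu>)"
    by (rule nn_integral_cong) (auto simp: D_def)
  finally have "emeasure M D = 0" using no_atoms by simp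
  have "((\<lambda>\<tau>. \<integral>p. 1 / (1 + \<tau> * \<bar>fst p - snd p\<bar>) \<partial>M) \<longlongrightarrow> (\<integral>p. indicator D p \<partial>M)) at_top"
  proof (rule integral_dominated_convergence_at_top[where w="\<lambda>_. 1"])
    show "AE p in M. ((\<lambda>\<tau>. 1 / (1 + \<tau> * \<bar>fst p - snd p\<bar>)) \<longlongrightarrow> indicator D p) at_top"
    proof (rule AE_I2)
      fix p :: "real \<times> real"
      show "((\<lambda>\<tau>. 1 / (1 + \<tau> * \<bar>fst p - snd p\<bar>)) \<longlongrightarrow> indicator D p) at_top"
      proof (cases "fst p = snd p")
        case True
        then have "p \<in> D" unfolding D_def by (cases p) auto
        then show ?thesis using True by simp
      next
        case False
        then have "p \<notin> D" "\<bar>fst p - snd p\<bar> > 0" unfolding D_def by auto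
        then show ?thesis by simp real_asymp
      qed
    qed
    show "\<forall>\<^sub>F \<tau> in at_top. AE p in M. norm (1 / (1 + \<tau> * \<bar>fst p - snd p\<bar>)) \<le> (1::real)"
      using eventually_ge_at_top[of "0::real"] by eventually_elim (auto intro!: AE_I2 simp: divide_le_eq)
    show "integrable M (\<lambda>_. 1 :: real)" by simp
  qed measurable
  then show ?thesis using \<open>emeasure M D = 0\<close> D_sets unfolding M_def by (simp add: measure_def)
qed

lemma abs_lambda1_le_integral_inverse_dist:
  fixes \<mu> :: "real measure"
  assumes \<mu>: "sets \<mu> = sets borel" "finite_measure \<mu>" and "\<tau> > 0"
    and spectral: "\<forall>s\<ge>0. \<forall>t\<ge>0. ip (K s h) (K t h) = (\<integral>x. cis ((s - t) * x) \<partial>\<mu>)"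
  shows "\<bar>lambda1 ip K h \<tau>\<bar> \<le> sqrt (3 * (\<integral>p. 1 / (1 + \<tau> * \<bar>fst p - snd p\<bar>) \<partial>(\<mu> \<Otimes>\<^sub>M \<mu>)))"
proof -
  define E where "E = (\<integral>p. 1 / (1 + \<tau> * \<bar>fst p - snd p\<bar>) \<partial>(\<mu> \<Otimes>\<^sub>M \<mu>))"
  have "\<bar>lambda1 ip K h \<tau>\<bar> \<le> sqrt (3 * \<tau> * E / \<tau>)"
  proof (rule abs_lambda1_le[OF \<open>\<tau> > 0\<close>])
    fix t assume "t \<in> {0..\<tau>}"
    then have kernel: "(cmod (ip (K s h) (K t h)))^2 = (cmod (\<integral>x. cis ((s - t) * x) \<partial>\<mu>))^2"
      if "s \<in> {0..\<tau>}" for s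
      using that spectral by simp
    have "set_integrable lborel {0..\<tau>} (\<lambda>s. (cmod (ip (K s h) (K t h)))^2)
        = set_integrable lborel {0..\<tau>} (\<lambda>s. (cmod (\<integral>x. cis ((s - t) * x) \<partial>\<mu>))^2)"
      by (rule set_integrable_cong) (simp_all add: kernel)
    with set_integrable_cmod_integral_cis_power2[OF \<mu>]
    show "set_integrable lborel {0..\<tau>} (\<lambda>s. (cmod (ip (K s h) (K t h)))^2)" by simp
    have "(LINT s:{0..\<tau>}|lborel. (cmod (ip (K s h) (K t h)))^2)
        = (LINT s:{0..\<tau>}|lborel. (cmod (\<integral>x. cis ((s - t) * x) \<partial>\<mu>))^2)"
      by (rule set_lebesgue_integral_cong) (simp_all add: kernel)
    then show "(LINT s:{0..\<tau>}|lborel. (cmod (ip (K s h) (K t h)))^2) \<le> 3 * \<tau> * E"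
      using set_integral_cmod_integral_cis_power2_le[OF \<mu> \<open>\<tau> > 0\<close>, of t] by (simp add: E_def)
  qed
  then show ?thesis using \<open>\<tau> > 0\<close> by (simp add: E_def)
qed

theorem proposition2:
  fixes sm :: "complex \<Rightarrow> 'a::banach \<Rightarrow> 'a"
    and ip :: "'a \<Rightarrow> 'a \<Rightarrow> complex"
    and K :: "real \<Rightarrow> 'a \<Rightarrow> 'a"
    and h :: 'a
    and \<mu> :: "real measure"
  assumes "complex_hilbert sm ip"
    and "isometry_semigroup sm K"
    and "h \<in> unitary_part K"
    and "sets \<mu> = sets borel"
    and "finite_measure \<mu>"
    and "\<forall>x. emeasure \<mu> {x} = 0"
    and "\<forall>s\<ge>0. \<forall>t\<ge>0. ip (K s h) (K t h) = (\<integral>x. cis ((s - t) * x) \<partial>\<mu>)"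
  shows "((\<lambda>\<tau>. lambda1 ip K h \<tau>) \<longlongrightarrow> 0) at_top"
proof -
  note \<mu> = assms(4,5)
  define E where "E \<tau> = (\<integral>p. 1 / (1 + \<tau> * \<bar>fst p - snd p\<bar>) \<partial>(\<mu> \<Otimes>\<^sub>M \<mu>))" for \<tau>
  have "\<forall>\<^sub>F \<tau> in at_top. norm (lambda1 ip K h \<tau>) \<le> sqrt (3 * E \<tau>)"
    using eventually_gt_at_top[of "0::real"]
    by eventually_elim
      (use abs_lambda1_le_integral_inverse_dist[where ip = ip and K = K and h = h, OF \<mu> _ assms(7)]
        in \<open>simp add: E_def\<close>)
  moreover have "((\<lambda>\<tau>. sqrt (3 * E \<tau>)) \<longlongrightarrow> 0) at_top"
    using tendsto_real_sqrt[OF tendsto_mult_right_zero[OF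
        tendsto_integral_inverse_dist_diagonal[OF \<mu>]]] assms(6)
    unfolding E_def by simp
  ultimately show ?thesis by (rule Lim_null_comparison)
qed

end
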